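(* Let $\mathfrak{g}$ be a finite-dimensional real pre-Lie algebra. The equation \[ (\mathrm{MC}_\phi)_x(x,y)=0 \qquad \text{for all } x,y\in\mathfrak{g} \] admits a solution $\phi\in\Omega^1(\mathfrak{g};\mathfrak{g})$ which is pointwise an isomorphism at the origin (and hence on some open neighborhood of the origin). Moreover, if one additionally imposes the boundary condition \[ \phi_x(x)=x \qquad \text{for all } x\in\mathfrak{g}, \] then the solution of the two equations is unique and is given by \[ \phi_x(y)=\int_0^1 e^{-t\,\mathrm{ad}_x}\,y\,dt,\qquad x\in\mathfrak{g},\ y\in T_x\mathfrak{g}\cong\mathfrak{g}. \]
   Context: A pre-Lie algebra is a vector space $\mathfrak{g}$ with an antisymmetric bilinear map $[\cdot,\cdot]:\mathfrak{g}\times\mathfrak{g}\to\mathfrak{g}$ (no Jacobi identity assumed); $\mathrm{ad}_x(y)=[x,y]$. Tangent spaces of $\mathfrak{g}$ are identified with $\mathfrak{g}$. $\Omega^*(\mathfrak{g};\mathfrak{g})$ denotes $\mathfrak{g}$-valued differential forms on $\mathfrak{g}$, with de Rham differential $d$ and bracket $[\omega,\eta](X_1,\dots,X_{p+q})=\sum_{\sigma\in S_{p,q}}\mathrm{sgn}(\sigma)[\omega(X_{\sigma(1)},\dots,X_{\sigma(p)}),\eta(X_{\sigma(p+1)},\dots,X_{\sigma(p+q)})]$ for $\omega$ a $p$-form and $\eta$ a $q$-form, $S_{p,q}$ the $(p,q)$-shuffles. For $\phi\in\Omega^1(\mathfrak{g};\mathfrak{g})$ the Maurer–Cartan 2-form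 is $\mathrm{MC}_\phi=d\phi+\tfrac12[\phi,\phi]$. *)

theory Defs
  imports "HOL-Analysis.Analysis"
begin

text \<open>A finite-dimensional real pre-Lie algebra: a finite-dimensional real vector space
  (type class euclidean_space) with an antisymmetric bilinear bracket (no Jacobi identity).\<close>
definition pre_lie :: "('a::euclidean_space \<Rightarrow> 'a \<Rightarrow> 'a) \<Rightarrow> bool" where
  "pre_lie br \<longleftrightarrow> bilinear br \<and> (\<forall>x y. br x y = - br y x)"

fun iter_deriv :: "('a::real_normed_vector \<Rightarrow> 'b::real_normed_vector) \<Rightarrow> 'a list \<Rightarrow> 'a \<Rightarrow> 'b" where
  "iter_deriv f [] = f"
| "iter_deriv f (v # vs) = (\<lambda>x. frechet_derivative (iter_deriv f vs) (at x) v)"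

definition smooth_map :: "('a::real_normed_vector \<Rightarrow> 'b::real_normed_vector) \<Rightarrow> bool" where
  "smooth_map f \<longleftrightarrow> (\<forall>vs x. iter_deriv f vs differentiable (at x))"

text \<open>A g-valued 1-form on g: phi x is the (linear) value at the point x, acting on tangent
  vectors T_x g = g; smooth in x.\<close>
definition one_form :: "('a::euclidean_space \<Rightarrow> 'a \<Rightarrow> 'a) \<Rightarrow> bool" where
  "one_form \<phi> \<longleftrightarrow> (\<forall>x. linear (\<phi> x)) \<and> (\<forall>y. smooth_map (\<lambda>x. \<phi> x y))"

text \<open>de Rham differential of a 1-form (evaluated on constant vector fields X, Y).\<close>
definition d_form :: "('a::euclidean_space \<Rightarrow> 'a \<Rightarrow> 'a) \<Rightarrow> 'a \<Rightarrow> 'a \<Rightarrow> 'a \<Rightarrow> 'a" where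
  "d_form \<phi> x X Y = frechet_derivative (\<lambda>z. \<phi> z Y) (at x) X - frechet_derivative (\<lambda>z. \<phi> z X) (at x) Y"

definition form_bracket :: "('a \<Rightarrow> 'a \<Rightarrow> 'a) \<Rightarrow> ('a \<Rightarrow> 'a \<Rightarrow> 'a) \<Rightarrow> ('a \<Rightarrow> 'a \<Rightarrow> 'a)
    \<Rightarrow> 'a \<Rightarrow> 'a \<Rightarrow> 'a \<Rightarrow> 'a::euclidean_space" where
  "form_bracket br \<omega> \<eta> x X Y = br (\<omega> x X) (\<eta> x Y) - br (\<omega> x Y) (\<eta> x X)"

definition MC :: "('a \<Rightarrow> 'a \<Rightarrow> 'a) \<Rightarrow> ('a \<Rightarrow> 'a \<Rightarrow> 'a) \<Rightarrow> 'a \<Rightarrow> 'a \<Rightarrow> 'a \<Rightarrow> 'a::euclidean_space" where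
  "MC br \<phi> x X Y = d_form \<phi> x X Y + (1/2) *\<^sub>R form_bracket br \<phi> \<phi> x X Y"

definition exp_neg_ad :: "('a \<Rightarrow> 'a \<Rightarrow> 'a) \<Rightarrow> real \<Rightarrow> 'a \<Rightarrow> 'a \<Rightarrow> 'a::euclidean_space" where
  "exp_neg_ad br t x y = (\<Sum>n. ((- t) ^ n / fact n) *\<^sub>R ((br x) ^^ n) y)"

definition phi0 :: "('a \<Rightarrow> 'a \<Rightarrow> 'a) \<Rightarrow> 'a \<Rightarrow> 'a \<Rightarrow> 'a::euclidean_space" where
  "phi0 br x y = integral {0..1} (\<lambda>t. exp_neg_ad br t x y)"

end

theory Submission
  imports Defs
begin

text \<open>Along a ray, the diagonal Maurer--Cartan equation together with \<open>\<phi>\<^sub>x(x) = x\<close> says that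
  \<open>u(t) = t \<phi>\<^sub>t\<^sub>x(y)\<close> solves the linear ODE \<open>u' = y - ad\<^sub>x u\<close> with \<open>u(0) = 0\<close>. Hence the solution is
  unique, and \<open>u(1)\<close> is the integral \<open>\<integral>\<^sub>0\<^sup>1 exp(-t ad\<^sub>x) y dt\<close>. For existence take the power series
  \<open>\<psi>\<^sub>x = \<Sum>\<^sub>n (-1)\<^sup>n/(n+1)! ad\<^sub>x\<^sup>n = (1 - exp(-ad\<^sub>x))/ad\<^sub>x\<close>: as a series of multilinear maps with
  infinite radius of convergence it is smooth in \<open>x\<close>, a comparison of coefficients shows that it
  satisfies both equations, and it is invertible near \<open>0\<close> because \<open>\<psi>\<^sub>0\<close> is the identity.\<close>

section \<open>Entire series of multilinear maps\<close>

text \<open>An \<open>n\<close>-linear map is encoded as a function on lists; only its values on lists of length \<open>n\<close>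
  matter.\<close>

definition multilinear :: "nat \<Rightarrow> ('a::real_vector list \<Rightarrow> 'b::real_vector) \<Rightarrow> bool" where
  "multilinear n T \<longleftrightarrow> (\<forall>xs i. length xs = n \<longrightarrow> i < n \<longrightarrow> linear (\<lambda>z. T (xs[i:=z])))"

lemma multilinearD:
  "multilinear n T \<Longrightarrow> length xs = n \<Longrightarrow> i < n \<Longrightarrow> linear (\<lambda>z. T (xs[i:=z]))"
  unfolding multilinear_def by blast

lemma multilinear_telescope:
  assumes "multilinear n T" "length as = n" "length bs = n"
  shows "T bs - T as = (\<Sum>i<n. T ((take i bs @ drop i as)[i := bs!i - as!i]))"
proof -
  define M where "M i = take i bs @ drop i as" for i
  have step: "T (M (Suc i)) - T (M i) = T ((M i)[i := bs!i - as!i])" if "i < n" for i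
  proof -
    have len: "length (M i) = n" using that assms by (simp add: M_def)
    have "M (Suc i) = (M i)[i := bs!i]"
      using that assms by (simp add: M_def take_Suc_conv_app_nth Cons_nth_drop_Suc[symmetric] list_update_append)
    moreover have "M i = (M i)[i := as!i]"
      using that assms by (simp add: M_def Cons_nth_drop_Suc[symmetric] list_update_append)
    ultimately show ?thesis
      using linear_diff[OF multilinearD[OF assms(1) len that], of "bs!i" "as!i"] by metis
  qed
  have "T bs - T as = T (M n) - T (M 0)" using assms by (simp add: M_def)
  also have "\<dots> = (\<Sum>i<n. T (M (Suc i)) - T (M i))" by (rule sum_lessThan_telescope[symmetric])
  also have "\<dots> = (\<Sum>i<n. T ((M i)[i := bs!i - as!i]))" by (rule sum.cong) (simp_all add: step)
  finally show ?thesis by (simp add: M_def)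
qed

lemma prod_list_norm_le_nth:
  fixes l :: "'a::real_normed_vector list"
  assumes "j < length l" "\<forall>k<length l. k \<noteq> j \<longrightarrow> norm (l!k) \<le> R" "1 \<le> R"
  shows "prod_list (map norm l) \<le> R ^ length l * norm (l!j)"
proof -
  let ?n = "length l"
  have "prod_list (map norm l) = norm (l!j) * (\<Prod>k\<in>{0..<?n}-{j}. norm (l!k))"
    using assms by (simp add: prod.list_conv_set_nth prod.remove[of _ j])
  also have "\<dots> \<le> norm (l!j) * (\<Prod>k\<in>{0..<?n}-{j}. R)"
    using assms by (intro mult_left_mono prod_mono) auto
  also have "\<dots> = norm (l!j) * R ^ (?n - 1)" using assms by simp
  also have "\<dots> \<le> norm (l!j) * R ^ ?n" using assms by (intro mult_left_mono power_increasing) auto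
  finally show ?thesis by (simp add: mult.commute)
qed

lemma prod_list_norm_le_nth2:
  fixes l :: "'a::real_normed_vector list"
  assumes "i < length l" "j < length l" "i \<noteq> j"
    "\<forall>k<length l. k \<noteq> i \<longrightarrow> k \<noteq> j \<longrightarrow> norm (l!k) \<le> R" "1 \<le> R"
  shows "prod_list (map norm l) \<le> R ^ length l * norm (l!i) * norm (l!j)"
proof -
  let ?n = "length l" and ?P = "\<Prod>k\<in>{0..<length l}-{i}-{j}. norm (l!k)"
  have "prod_list (map norm l) = norm (l!i) * (norm (l!j) * ?P)"
    using assms by (simp add: prod.list_conv_set_nth prod.remove[of _ i] prod.remove[of _ j])
  moreover have "?P \<le> R ^ ?n"
  proof -
    have "?P \<le> (\<Prod>k\<in>{0..<?n}-{i}-{j}. R)" using assms by (intro prod_mono) auto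
    also have "\<dots> = R ^ (?n - 2)" using assms by (simp add: numeral_2_eq_2)
    also have "\<dots> \<le> R ^ ?n" using assms by (intro power_increasing) auto
    finally show ?thesis .
  qed
  ultimately have "prod_list (map norm l) \<le> norm (l!i) * (norm (l!j) * R ^ ?n)"
    by (simp add: mult_left_mono)
  then show ?thesis by (simp only: ac_simps)
qed

definition entire_coeffs :: "(nat \<Rightarrow> real) \<Rightarrow> bool" where
  "entire_coeffs K \<longleftrightarrow> (\<forall>n. 0 \<le> K n) \<and> (\<forall>r\<ge>0. summable (\<lambda>n. K n * r^n))"

lemma entire_coeffsD:
  "entire_coeffs K \<Longrightarrow> 0 \<le> K n"
  "entire_coeffs K \<Longrightarrow> 0 \<le> r \<Longrightarrow> summable (\<lambda>n. K n * r^n)"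
  unfolding entire_coeffs_def by auto

lemma entire_coeffs_mult_of_nat:
  assumes K: "entire_coeffs K"
  shows "entire_coeffs (\<lambda>n. real n * K n)"
  unfolding entire_coeffs_def
proof (intro conjI allI impI)
  show "0 \<le> real n * K n" for n using entire_coeffsD(1)[OF K] by simp
  fix r :: real assume r: "0 \<le> r"
  show "summable (\<lambda>n. real n * K n * r^n)"
  proof (rule summable_comparison_test'[OF entire_coeffsD(2)[OF K, of "2*r"]])
    fix n
    have "real n \<le> 2 ^ n" using of_nat_less_two_power[of n, where 'a=real] by linarith
    then have "real n * K n * r^n \<le> 2 ^ n * K n * r^n"
      using r entire_coeffsD(1)[OF K] by (intro mult_right_mono) auto
    then show "norm (real n * K n * r^n) \<le> K n * (2*r)^n"
      using r entire_coeffsD(1)[OF K, of n] by (simp add: power_mult_distrib mult_ac)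
  qed (use r in simp)
qed

lemma entire_coeffs_shift:
  assumes K: "entire_coeffs K"
  shows "entire_coeffs (\<lambda>n. K (Suc n))"
  unfolding entire_coeffs_def
proof (intro conjI allI impI)
  show "0 \<le> K (Suc n)" for n by (rule entire_coeffsD(1)[OF K])
  fix r :: real assume r: "0 \<le> r"
  have "summable (\<lambda>n. K (Suc n) * (r+1) ^ Suc n)"
    using entire_coeffsD(2)[OF K, of "r+1"] summable_Suc_iff[of "\<lambda>n. K n * (r+1)^n"] r by simp
  then show "summable (\<lambda>n. K (Suc n) * r^n)"
  proof (rule summable_comparison_test')
    fix n
    have "r^n \<le> (r+1)^Suc n"
    proof -
      have "r^n \<le> (r+1)^n" using r by (intro power_mono) auto
      also have "\<dots> \<le> (r+1)^Suc n" using r by (intro power_increasing) auto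
      finally show ?thesis .
    qed
    then show "norm (K (Suc n) * r^n) \<le> K (Suc n) * (r+1) ^ Suc n"
      using r entire_coeffsD(1)[OF K, of "Suc n"] by (simp add: mult_left_mono)
  qed
qed

lemma entire_coeffs_scale:
  "entire_coeffs K \<Longrightarrow> 0 \<le> c \<Longrightarrow> entire_coeffs (\<lambda>n. c * K n)"
  unfolding entire_coeffs_def by (auto simp: mult.assoc intro: summable_mult)

definition entire_series :: "(nat \<Rightarrow> 'a::real_normed_vector list \<Rightarrow> 'b::real_normed_vector) \<Rightarrow> (nat \<Rightarrow> real) \<Rightarrow> bool" where
  "entire_series T K \<longleftrightarrow> (\<forall>n. multilinear n (T n)) \<and>
     (\<forall>n xs. length xs = n \<longrightarrow> norm (T n xs) \<le> K n * prod_list (map norm xs)) \<and> entire_coeffs K"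

definition series_sum :: "(nat \<Rightarrow> 'a list \<Rightarrow> 'b) \<Rightarrow> 'a \<Rightarrow> 'b::real_normed_vector" where
  "series_sum T x = (\<Sum>n. T n (replicate n x))"

definition series_deriv :: "(nat \<Rightarrow> 'a list \<Rightarrow> 'b) \<Rightarrow> 'a \<Rightarrow> 'a \<Rightarrow> 'b::real_normed_vector" where
  "series_deriv T x h = (\<Sum>n. \<Sum>i<n. T n ((replicate n x)[i:=h]))"

lemma entire_seriesD:
  assumes "entire_series T K"
  shows "multilinear n (T n)" "length xs = n \<Longrightarrow> norm (T n xs) \<le> K n * prod_list (map norm xs)"
    "entire_coeffs K"
  using assms unfolding entire_series_def by auto

lemma entire_series_update_bound:
  assumes "entire_series T K" "i < n" "norm x \<le> R" "1 \<le> R"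
  shows "norm (T n ((replicate n x)[i:=h])) \<le> K n * R^n * norm h"
proof -
  let ?l = "(replicate n x)[i:=h]"
  have "norm (T n ?l) \<le> K n * prod_list (map norm ?l)" by (rule entire_seriesD(2)[OF assms(1)]) simp
  also have "prod_list (map norm ?l) \<le> R ^ n * norm h"
    using prod_list_norm_le_nth[of i ?l R] assms by (simp add: nth_list_update)
  then have "K n * prod_list (map norm ?l) \<le> K n * (R ^ n * norm h)"
    by (intro mult_left_mono entire_coeffsD(1)[OF entire_seriesD(3)[OF assms(1)]])
  finally show ?thesis by (simp add: mult.assoc)
qed

lemma norm_series_deriv_term_le:
  assumes "entire_series T K" "norm x \<le> R" "1 \<le> R"
  shows "norm (\<Sum>i<n. T n ((replicate n x)[i:=h])) \<le> real n * K n * R^n * norm h"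
proof -
  have "norm (\<Sum>i<n. T n ((replicate n x)[i:=h])) \<le> (\<Sum>i<n. K n * R^n * norm h)"
    by (rule sum_norm_le) (use entire_series_update_bound[OF assms(1) _ assms(2,3)] in auto)
  then show ?thesis by simp
qed

lemma summable_series_sum:
  fixes T :: "nat \<Rightarrow> 'a::real_normed_vector list \<Rightarrow> 'b::banach"
  assumes "entire_series T K"
  shows "summable (\<lambda>n. T n (replicate n x))"
proof (rule summable_comparison_test')
  show "norm (T n (replicate n x)) \<le> K n * norm x ^ n" for n
    using entire_seriesD(2)[OF assms, of "replicate n x" n] by simp
qed (rule entire_coeffsD(2)[OF entire_seriesD(3)[OF assms]], simp)

lemma summable_series_deriv:
  fixes T :: "nat \<Rightarrow> 'a::real_normed_vector list \<Rightarrow> 'b::banach"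
  assumes "entire_series T K"
  shows "summable (\<lambda>n. \<Sum>i<n. T n ((replicate n x)[i:=h]))"
proof (rule summable_comparison_test')
  show "norm (\<Sum>i<n. T n ((replicate n x)[i:=h])) \<le> real n * K n * (norm x + 1)^n * norm h" for n
    by (rule norm_series_deriv_term_le[OF assms]) auto
  show "summable (\<lambda>n. real n * K n * (norm x + 1)^n * norm h)"
    by (rule summable_mult2, rule entire_coeffsD(2)[OF entire_coeffs_mult_of_nat])
      (use entire_seriesD(3)[OF assms] in simp_all)
qed

lemma norm_entire_series_two_slots_le:
  assumes "entire_series T K" "length C = n" "i < n" "j < n" "i \<noteq> j" "1 \<le> R"
    "\<forall>k<n. k \<noteq> i \<longrightarrow> k \<noteq> j \<longrightarrow> norm (C!k) \<le> R" "norm (C!i) \<le> a" "norm (C!j) \<le> a"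
  shows "norm (T n C) \<le> K n * R^n * a^2"
proof -
  have K0: "0 \<le> K n" by (rule entire_coeffsD(1)[OF entire_seriesD(3)[OF assms(1)]])
  have "prod_list (map norm C) \<le> R ^ n * norm (C!i) * norm (C!j)"
    using prod_list_norm_le_nth2[of i C j R] assms(2-7) by simp
  also have "\<dots> \<le> R ^ n * a * a"
    using assms(6,8,9) order_trans[OF norm_ge_zero assms(8)] by (intro mult_mono mult_left_mono) auto
  finally have "K n * prod_list (map norm C) \<le> K n * (R ^ n * a * a)" by (rule mult_left_mono[OF _ K0])
  then show ?thesis
    using entire_seriesD(2)[OF assms(1,2)] by (simp add: power2_eq_square mult.assoc)
qed

text \<open>Telescoping twice writes the second-order remainder of the degree \<open>n\<close> term as a sum of
  \<open>n\<^sup>2\<close> terms, each with two slots filled by \<open>h\<close> (or one slot filled by \<open>0\<close>).\<close>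

lemma entire_series_remainder_term_bound:
  assumes "entire_series T K" "norm x + 1 \<le> R" "norm h \<le> 1" "i < n"
  shows "norm (T n ((replicate i (x+h) @ replicate (n-i) x)[i:=h]) - T n ((replicate n x)[i:=h]))
          \<le> real n * (K n * R^n * (norm h)^2)"
proof -
  have ml: "multilinear n (T n)" by (rule entire_seriesD(1)[OF assms(1)])
  have R1: "1 \<le> R" using assms(2) norm_ge_zero[of x] by linarith
  have nxh: "norm (x+h) \<le> R" using assms(2,3) norm_triangle_ineq[of x h] by linarith
  have nx: "norm x \<le> R" using assms(2) by linarith
  define A where "A = (replicate i (x+h) @ replicate (n-i) x)[i:=h]"
  define B where "B = (replicate n x)[i:=h]"
  have lenA: "length A = n" and lenB: "length B = n" using assms(4) by (simp_all add: A_def B_def)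
  have nA: "A ! k = (if k = i then h else if k < i then x+h else x)" if "k < n" for k
    using that assms(4) by (auto simp: A_def nth_list_update nth_append)
  have nB: "B ! k = (if k = i then h else x)" if "k < n" for k
    using that by (simp add: B_def nth_list_update)
  have "norm (T n A - T n B) = norm (\<Sum>j<n. T n ((take j A @ drop j B)[j := A!j - B!j]))"
    by (simp add: multilinear_telescope[OF ml lenB lenA])
  also have "\<dots> \<le> (\<Sum>j<n. K n * R^n * (norm h)^2)"
  proof (rule sum_norm_le)
    fix j assume "j \<in> {..<n}"
    then have j: "j < n" by simp
    define C where "C = (take j A @ drop j B)[j := A!j - B!j]"
    have lenC: "length C = n" using lenA lenB j by (simp add: C_def)
    have nC: "C ! k = (if k = j then A!j - B!j else if k < j then A!k else B!k)" if "k < n" for k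
      using that j lenA lenB by (simp add: C_def nth_list_update nth_append min_def)
    show "norm (T n C) \<le> K n * R^n * (norm h)^2"
    proof (cases "j = i")
      case True
      have "C ! j = 0" using nC[OF j] True nA[OF j] nB[OF j] by simp
      then have "T n C = 0" using linear_0[OF multilinearD[OF ml lenC j]] by (metis list_update_id)
      then show ?thesis
        using entire_coeffsD(1)[OF entire_seriesD(3)[OF assms(1)]] R1 by simp
    next
      case False
      show ?thesis
        by (rule norm_entire_series_two_slots_le[OF assms(1) lenC j assms(4) False R1])
          (use nC nA nB nxh nx False nC[OF j] nC[OF assms(4)] nA[OF j] nA[OF assms(4)] nB[OF j] nB[OF assms(4)]
            in auto)
    qed
  qed
  finally show ?thesis by (simp add: A_def B_def)
qed

lemma entire_series_remainder_bound:
  assumes "entire_series T K" "norm x + 1 \<le> R" "norm h \<le> 1"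
  shows "norm (T n (replicate n (x+h)) - T n (replicate n x) - (\<Sum>i<n. T n ((replicate n x)[i:=h])))
          \<le> real n * (real n * K n) * R^n * (norm h)^2"
proof -
  have "T n (replicate n (x+h)) - T n (replicate n x) - (\<Sum>i<n. T n ((replicate n x)[i:=h]))
      = (\<Sum>i<n. T n ((replicate i (x+h) @ replicate (n-i) x)[i:=h]) - T n ((replicate n x)[i:=h]))"
    by (subst multilinear_telescope[OF entire_seriesD(1)[OF assms(1)]])
      (auto simp: sum_subtractf intro!: sum.cong)
  also have "norm \<dots> \<le> (\<Sum>i<n. real n * (K n * R^n * (norm h)^2))"
    by (intro sum_norm_le entire_series_remainder_term_bound[OF assms]) simp
  finally show ?thesis by simp
qed

lemma bounded_linear_series_deriv:
  fixes T :: "nat \<Rightarrow> 'a::real_normed_vector list \<Rightarrow> 'b::banach"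
  assumes "entire_series T K"
  shows "bounded_linear (series_deriv T x)"
proof -
  have lin: "linear (\<lambda>h. T n ((replicate n x)[i:=h]))" if "i < n" for n i
    using multilinearD[OF entire_seriesD(1)[OF assms]] that by simp
  define R where "R = norm x + 1"
  have sM: "summable (\<lambda>n. real n * K n * R^n)"
    by (rule entire_coeffsD(2)[OF entire_coeffs_mult_of_nat[OF entire_seriesD(3)[OF assms]]])
      (simp add: R_def)
  show ?thesis
  proof (rule bounded_linear_intro[where K="\<Sum>n. real n * K n * R^n"])
    fix a b :: 'a and c :: real
    show "series_deriv T x (a + b) = series_deriv T x a + series_deriv T x b"
      unfolding series_deriv_def
      by (subst suminf_add[OF summable_series_deriv[OF assms] summable_series_deriv[OF assms]])
        (simp add: linear_add[OF lin] sum.distrib)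
    have "(\<Sum>i<n. T n ((replicate n x)[i:=c *\<^sub>R a])) = c *\<^sub>R (\<Sum>i<n. T n ((replicate n x)[i:=a]))" for n
      by (simp add: linear_scale[OF lin] scaleR_sum_right)
    then show "series_deriv T x (c *\<^sub>R a) = c *\<^sub>R series_deriv T x a"
      unfolding series_deriv_def by (simp add: suminf_scaleR_right[OF summable_series_deriv[OF assms]])
    have "norm (series_deriv T x a) \<le> (\<Sum>n. real n * K n * R^n * norm a)"
      unfolding series_deriv_def
      by (rule norm_suminf_le[OF norm_series_deriv_term_le[OF assms] summable_mult2[OF sM]])
        (simp_all add: R_def)
    also have "\<dots> = (\<Sum>n. real n * K n * R^n) * norm a" by (rule suminf_mult2[OF sM, symmetric])
    finally show "norm (series_deriv T x a) \<le> norm a * (\<Sum>n. real n * K n * R^n)"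
      by (simp only: mult.commute)
  qed
qed

lemma has_derivative_at_quadratic_remainder:
  fixes f :: "'a::real_normed_vector \<Rightarrow> 'b::real_normed_vector"
  assumes "bounded_linear f'" "0 \<le> C"
    and rem: "\<And>h. norm h \<le> 1 \<Longrightarrow> norm (f (x + h) - f x - f' h) \<le> C * (norm h)^2"
  shows "(f has_derivative f') (at x)"
  unfolding has_derivative_at_alt
proof (intro conjI allI impI assms(1))
  fix e :: real assume e: "0 < e"
  show "\<exists>d>0. \<forall>y. norm (y - x) < d \<longrightarrow> norm (f y - f x - f' (y - x)) \<le> e * norm (y - x)"
  proof (intro exI[of _ "min 1 (e/(C+1))"] conjI allI impI)
    show "0 < min 1 (e/(C+1))" using e assms(2) by simp
    fix y assume y: "norm (y - x) < min 1 (e/(C+1))"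
    define h where "h = y - x"
    have "norm h * (C+1) < e" using y assms(2) by (simp add: h_def pos_less_divide_eq)
    moreover have "C * norm h \<le> norm h * (C+1)" by (simp add: algebra_simps)
    ultimately have "C * norm h \<le> e" by linarith
    then have "(C * norm h) * norm h \<le> e * norm h" by (rule mult_right_mono) simp
    moreover have "norm (f y - f x - f' h) \<le> (C * norm h) * norm h"
      using rem[of h] y by (simp add: h_def power2_eq_square mult.assoc)
    ultimately show "norm (f y - f x - f' (y - x)) \<le> e * norm (y - x)" by (simp add: h_def)
  qed
qed

lemma has_derivative_series_sum:
  fixes T :: "nat \<Rightarrow> 'a::real_normed_vector list \<Rightarrow> 'b::banach"
  assumes "entire_series T K"
  shows "(series_sum T has_derivative series_deriv T x) (at x)"
proof -
  define R where "R = norm x + 1"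
  define K2 where "K2 n = real n * (real n * K n)" for n
  have K2: "entire_coeffs K2"
    unfolding K2_def by (intro entire_coeffs_mult_of_nat entire_seriesD(3)[OF assms])
  have sC: "summable (\<lambda>n. K2 n * R^n)" by (rule entire_coeffsD(2)[OF K2]) (simp add: R_def)
  show ?thesis
  proof (rule has_derivative_at_quadratic_remainder[OF bounded_linear_series_deriv[OF assms]])
    show "0 \<le> (\<Sum>n. K2 n * R^n)"
      by (rule suminf_nonneg[OF sC]) (simp add: entire_coeffsD(1)[OF K2] R_def)
    fix h :: 'a assume h: "norm h \<le> 1"
    have "series_sum T (x+h) - series_sum T x - series_deriv T x h
      = (\<Sum>n. T n (replicate n (x+h)) - T n (replicate n x) - (\<Sum>i<n. T n ((replicate n x)[i:=h])))"
      unfolding series_sum_def series_deriv_def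
      by (simp only: suminf_diff summable_diff summable_series_sum[OF assms] summable_series_deriv[OF assms])
    also have "norm \<dots> \<le> (\<Sum>n. K2 n * R^n * (norm h)^2)"
      unfolding K2_def
      by (rule norm_suminf_le[OF entire_series_remainder_bound[OF assms _ h]])
        (use summable_mult2[OF sC] in \<open>simp_all add: R_def K2_def\<close>)
    also have "\<dots> = (\<Sum>n. K2 n * R^n) * (norm h)^2" by (rule suminf_mult2[OF sC, symmetric])
    finally show "norm (series_sum T (x + h) - series_sum T x - series_deriv T x h)
        \<le> (\<Sum>n. K2 n * R^n) * (norm h)^2" .
  qed
qed

text \<open>The directional derivative of an entire series is again an entire series: inserting
  \<open>v\<close> into each of the \<open>m + 1\<close> slots of the degree \<open>m + 1\<close> term gives the degree \<open>m\<close> term.\<close>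

definition directional_deriv_series :: "(nat \<Rightarrow> 'a list \<Rightarrow> 'b) \<Rightarrow> 'a \<Rightarrow> nat \<Rightarrow> 'a list \<Rightarrow> 'b::real_normed_vector" where
  "directional_deriv_series T v m xs = (\<Sum>i<Suc m. T (Suc m) (take i xs @ v # drop i xs))"

lemma insert_list_update:
  assumes "i \<le> length xs" "k < length xs"
  shows "take i (xs[k:=z]) @ v # drop i (xs[k:=z]) = (take i xs @ v # drop i xs)[(if k < i then k else Suc k) := z]"
  using assms by (intro nth_equalityI) (auto simp: nth_append nth_list_update nth_Cons' min_def)

lemma insert_replicate:
  assumes "i \<le> m"
  shows "(replicate (Suc m) x)[i:=v] = take i (replicate m x) @ v # drop i (replicate m x)"
proof -
  have "replicate (Suc m) x = replicate i x @ x # replicate (m - i) x"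
    using assms by (simp flip: replicate_Suc replicate_add)
  then show ?thesis using assms by (simp add: list_update_append min_def)
qed

lemma entire_series_directional_deriv_series:
  assumes "entire_series T K"
  shows "entire_series (directional_deriv_series T v) (\<lambda>m. norm v * (real (Suc m) * K (Suc m)))"
  unfolding entire_series_def
proof (intro conjI allI impI)
  show "multilinear m (directional_deriv_series T v m)" for m
    unfolding multilinear_def
  proof (intro allI impI)
    fix xs :: "'a list" and k assume len: "length xs = m" and k: "k < m"
    have "linear (\<lambda>z. \<Sum>i<Suc m. T (Suc m) ((take i xs @ v # drop i xs)[(if k < i then k else Suc k) := z]))"
      using multilinearD[OF entire_seriesD(1)[OF assms]] len k
      by (intro linear_compose_sum ballI) auto
    then show "linear (\<lambda>z. directional_deriv_series T v m (xs[k:=z]))"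
      unfolding directional_deriv_series_def using len k by (simp add: insert_list_update)
  qed
  show "norm (directional_deriv_series T v m xs) \<le> norm v * (real (Suc m) * K (Suc m)) * prod_list (map norm xs)"
    if len: "length xs = m" for m xs
  proof -
    have prod: "prod_list (map norm (take i xs @ v # drop i xs)) = norm v * prod_list (map norm xs)" for i
    proof -
      have "prod_list (map norm (take i xs)) * prod_list (map norm (drop i xs)) = prod_list (map norm xs)"
        by (metis append_take_drop_id map_append prod_list.append)
      then show ?thesis by (simp add: mult_ac)
    qed
    have "norm (directional_deriv_series T v m xs) \<le> (\<Sum>i<Suc m. K (Suc m) * prod_list (map norm (take i xs @ v # drop i xs)))"
      unfolding directional_deriv_series_def using len by (intro sum_norm_le entire_seriesD(2)[OF assms]) auto
    then show ?thesis unfolding prod by (simp add: mult_ac)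
  qed
  show "entire_coeffs (\<lambda>m. norm v * (real (Suc m) * K (Suc m)))"
    using entire_coeffs_scale[OF entire_coeffs_shift[OF entire_coeffs_mult_of_nat[OF entire_seriesD(3)[OF assms]]]]
    by simp
qed

lemma series_deriv_eq_series_sum:
  fixes T :: "nat \<Rightarrow> 'a::real_normed_vector list \<Rightarrow> 'b::banach"
  assumes "entire_series T K"
  shows "series_deriv T x v = series_sum (directional_deriv_series T v) x"
proof -
  have "series_deriv T x v = (\<Sum>n. \<Sum>i<Suc n. T (Suc n) ((replicate (Suc n) x)[i:=v]))"
    unfolding series_deriv_def using suminf_split_head[OF summable_series_deriv[OF assms, of x v]] by simp
  also have "\<dots> = series_sum (directional_deriv_series T v) x"
    unfolding series_sum_def directional_deriv_series_def
    by (intro suminf_cong sum.cong refl) (metis insert_replicate lessThan_iff less_Suc_eq_le)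
  finally show ?thesis .
qed

lemma iter_deriv_series_sum:
  fixes T :: "nat \<Rightarrow> 'a::real_normed_vector list \<Rightarrow> 'b::banach"
  assumes "entire_series T K"
  shows "\<exists>T' K'. entire_series T' K' \<and> iter_deriv (series_sum T) vs = series_sum T'"
proof (induction vs)
  case Nil
  then show ?case using assms by auto
next
  case (Cons v vs)
  then obtain T' K' where T': "entire_series T' K'" and e: "iter_deriv (series_sum T) vs = series_sum T'"
    by blast
  have "iter_deriv (series_sum T) (v#vs) = (\<lambda>x. series_deriv T' x v)"
    using frechet_derivative_at[OF has_derivative_series_sum[OF T']] by (simp add: e)
  also have "\<dots> = series_sum (directional_deriv_series T' v)" using series_deriv_eq_series_sum[OF T'] by auto
  finally show ?case using entire_series_directional_deriv_series[OF T'] by blast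
qed

lemma smooth_map_series_sum:
  fixes T :: "nat \<Rightarrow> 'a::real_normed_vector list \<Rightarrow> 'b::banach"
  assumes "entire_series T K"
  shows "smooth_map (series_sum T)"
  unfolding smooth_map_def
  using iter_deriv_series_sum[OF assms] has_derivative_series_sum differentiableI by metis

section \<open>The series \<open>\<psi>\<^sub>x = (1 - exp(-ad\<^sub>x))/ad\<^sub>x\<close>\<close>

text \<open>Taylor coefficients of \<open>(1 - exp(-z))/z = \<integral>\<^sub>0\<^sup>1 exp(-t z) dt\<close>.\<close>

definition psi_coeff :: "nat \<Rightarrow> real" where
  "psi_coeff n = (-1)^n / fact (Suc n)"

definition psi :: "('a \<Rightarrow> 'a \<Rightarrow> 'a) \<Rightarrow> 'a \<Rightarrow> 'a \<Rightarrow> 'a::real_normed_vector" where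
  "psi br x y = (\<Sum>n. psi_coeff n *\<^sub>R (br x ^^ n) y)"

definition psi_terms :: "('a \<Rightarrow> 'a \<Rightarrow> 'a) \<Rightarrow> 'a \<Rightarrow> nat \<Rightarrow> 'a list \<Rightarrow> 'a::real_normed_vector" where
  "psi_terms br y n xs = psi_coeff n *\<^sub>R foldr br xs y"

lemma foldr_replicate: "foldr f (replicate n x) y = (f x ^^ n) y"
  by (induction n) auto

lemma psi_eq_series_sum: "(\<lambda>z. psi br z y) = series_sum (psi_terms br y)"
  by (simp add: fun_eq_iff psi_def series_sum_def psi_terms_def foldr_replicate)

lemma abs_psi_coeff_le: "\<bar>psi_coeff n\<bar> \<le> inverse (fact n)"
proof -
  have "\<bar>psi_coeff n\<bar> = 1 / fact (Suc n)" by (simp add: psi_coeff_def abs_div)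
  also have "\<dots> \<le> 1 / fact n" by (intro divide_left_mono fact_mono) auto
  finally show ?thesis by (simp add: divide_inverse)
qed

lemma psi_coeff_Suc_mult: "real n * psi_coeff n + psi_coeff n = (-1)^n / fact n"
proof -
  have "fact (Suc n) = (real n + 1) * (fact n :: real)" by (simp add: algebra_simps)
  moreover have "real n * psi_coeff n + psi_coeff n = (real n + 1) * ((-1)^n / fact (Suc n))"
    by (simp only: psi_coeff_def distrib_right mult_1_left)
  moreover have "real n + 1 \<noteq> 0" by linarith
  ultimately show ?thesis by (metis mult_divide_mult_cancel_left times_divide_eq_right)
qed

lemma linear_foldr_update:
  assumes "bilinear br" "i < length xs"
  shows "linear (\<lambda>z. foldr br (xs[i:=z]) y)"
  using assms(2)
proof (induction xs arbitrary: i)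
  case (Cons a xs)
  show ?case
  proof (cases i)
    case 0
    then show ?thesis using assms(1) by (simp add: bilinear_def)
  next
    case (Suc j)
    then have "linear (br a \<circ> (\<lambda>z. foldr br (xs[j:=z]) y))"
      using Cons assms(1) by (intro linear_compose) (auto simp: bilinear_def)
    then show ?thesis using Suc by (simp add: o_def)
  qed
qed simp

lemma norm_foldr_le:
  fixes f :: "'a::real_normed_vector \<Rightarrow> 'b \<Rightarrow> 'b::real_normed_vector"
  assumes "\<And>a b. norm (f a b) \<le> B * norm a * norm b" "0 \<le> B"
  shows "norm (foldr f xs y) \<le> B ^ length xs * prod_list (map norm xs) * norm y"
proof (induction xs)
  case (Cons a xs)
  have "norm (foldr f (a#xs) y) \<le> B * norm a * norm (foldr f xs y)" using assms(1) by simp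
  also have "\<dots> \<le> B * norm a * (B ^ length xs * prod_list (map norm xs) * norm y)"
    by (rule mult_left_mono[OF Cons.IH]) (use assms(2) in simp)
  finally show ?case by (simp add: mult_ac)
qed simp

lemma norm_funpow_le:
  fixes f :: "'a \<Rightarrow> 'a \<Rightarrow> 'a::real_normed_vector"
  assumes "\<And>a b. norm (f a b) \<le> B * norm a * norm b" "0 \<le> B"
  shows "norm ((f x ^^ n) y) \<le> (B * norm x)^n * norm y"
  using norm_foldr_le[OF assms, of "replicate n x" y] by (simp add: foldr_replicate power_mult_distrib)

lemma entire_series_psi_terms:
  fixes br :: "'a::euclidean_space \<Rightarrow> 'a \<Rightarrow> 'a"
  assumes "bilinear br"
  shows "\<exists>K. entire_series (psi_terms br y) K"
proof -
  obtain B where B: "B > 0" "\<And>a b. norm (br a b) \<le> B * norm a * norm b"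
    using bilinear_bounded_pos[OF assms] by blast
  define K where "K n = \<bar>psi_coeff n\<bar> * B^n * norm y" for n
  have "entire_series (psi_terms br y) K" unfolding entire_series_def entire_coeffs_def
  proof (intro conjI allI impI)
    show "multilinear n (psi_terms br y n)" for n
      unfolding multilinear_def psi_terms_def
      by (auto intro: linear_compose_scale_right linear_foldr_update[OF assms])
    show "norm (psi_terms br y n xs) \<le> K n * prod_list (map norm xs)" if "length xs = n" for n xs
    proof -
      have "norm (psi_terms br y n xs) \<le> \<bar>psi_coeff n\<bar> * (B ^ length xs * prod_list (map norm xs) * norm y)"
        unfolding psi_terms_def using norm_foldr_le[of br B] B by (simp add: mult_left_mono)
      then show ?thesis using that by (simp add: K_def mult_ac)
    qed
    show "0 \<le> K n" for n using B by (simp add: K_def)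
    fix r :: real assume r: "0 \<le> r"
    show "summable (\<lambda>n. K n * r^n)"
    proof (rule summable_comparison_test'[OF summable_mult[OF summable_exp[of "B*r"], of "norm y"]])
      fix n
      have "norm (K n * r^n) = \<bar>psi_coeff n\<bar> * ((B*r)^n * norm y)"
        using B r by (simp add: K_def abs_mult power_mult_distrib mult_ac)
      also have "\<dots> \<le> inverse (fact n) * ((B*r)^n * norm y)"
        by (rule mult_right_mono[OF abs_psi_coeff_le]) (use B r in simp)
      finally show "norm (K n * r^n) \<le> norm y * (inverse (fact n) * (B*r)^n)"
        by (simp only: ac_simps)
    qed
  qed
  then show ?thesis by blast
qed

lemma summable_psi:
  fixes br :: "'a::euclidean_space \<Rightarrow> 'a \<Rightarrow> 'a"
  assumes "bilinear br"
  shows "summable (\<lambda>n. psi_coeff n *\<^sub>R (br x ^^ n) y)"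
  using entire_series_psi_terms[OF assms] summable_series_sum
  by (fastforce simp: psi_terms_def foldr_replicate)

lemma has_derivative_psi:
  fixes br :: "'a::euclidean_space \<Rightarrow> 'a \<Rightarrow> 'a"
  assumes "bilinear br"
  shows "((\<lambda>z. psi br z y) has_derivative series_deriv (psi_terms br y) x) (at x)"
  using entire_series_psi_terms[OF assms] has_derivative_series_sum by (metis psi_eq_series_sum)

lemma smooth_map_psi:
  fixes br :: "'a::euclidean_space \<Rightarrow> 'a \<Rightarrow> 'a"
  assumes "bilinear br"
  shows "smooth_map (\<lambda>z. psi br z y)"
  using entire_series_psi_terms[OF assms] smooth_map_series_sum by (metis psi_eq_series_sum)

lemma linear_funpow:
  fixes f :: "'a::real_vector \<Rightarrow> 'a"
  assumes "linear f"
  shows "linear (f ^^ n)"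
proof (induction n)
  case (Suc n)
  have "linear (f \<circ> (f ^^ n))" by (rule linear_compose[OF Suc.IH assms])
  then show ?case by (simp only: funpow.simps(2))
qed (simp add: linear_iff)

lemma linear_psi:
  fixes br :: "'a::euclidean_space \<Rightarrow> 'a \<Rightarrow> 'a"
  assumes "bilinear br"
  shows "linear (psi br x)"
proof -
  have lin: "linear (br x ^^ n)" for n
    using assms by (intro linear_funpow) (simp add: bilinear_def)
  show ?thesis
  proof (rule linearI)
    fix a b :: 'a and c :: real
    show "psi br x (a + b) = psi br x a + psi br x b"
      unfolding psi_def
      by (subst suminf_add[OF summable_psi[OF assms] summable_psi[OF assms]])
        (simp add: linear_add[OF lin] scaleR_add_right)
    have "psi_coeff n *\<^sub>R (br x ^^ n) (c *\<^sub>R a) = c *\<^sub>R (psi_coeff n *\<^sub>R (br x ^^ n) a)" for n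
      by (simp add: linear_scale[OF lin])
    then show "psi br x (c *\<^sub>R a) = c *\<^sub>R psi br x a"
      unfolding psi_def by (simp add: suminf_scaleR_right[OF summable_psi[OF assms]])
  qed
qed

lemma replicate_update_same: "(replicate n x)[i:=x] = replicate n x"
  by (induction n arbitrary: i) (auto split: nat.split)

lemma series_deriv_psi_terms_diag:
  "series_deriv (psi_terms br y) x x = (\<Sum>n. (real n * psi_coeff n) *\<^sub>R (br x ^^ n) y)"
  by (simp add: series_deriv_def psi_terms_def foldr_replicate replicate_update_same sum_constant_scaleR)

lemma summable_series_deriv_psi_terms_diag:
  fixes br :: "'a::euclidean_space \<Rightarrow> 'a \<Rightarrow> 'a"
  assumes "bilinear br"
  shows "summable (\<lambda>n. (real n * psi_coeff n) *\<^sub>R (br x ^^ n) y)"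
  using entire_series_psi_terms[OF assms] summable_series_deriv[of "psi_terms br y" _ x x]
  by (fastforce simp: psi_terms_def foldr_replicate replicate_update_same sum_constant_scaleR)

lemma funpow_bracket_scaleR:
  fixes br :: "'a::real_vector \<Rightarrow> 'b \<Rightarrow> 'b::real_vector"
  assumes "bilinear br"
  shows "(br (s *\<^sub>R x) ^^ n) y = s^n *\<^sub>R (br x ^^ n) y"
  by (induction n) (simp_all add: bilinear_lmul[OF assms] bilinear_rmul[OF assms])

lemma exp_neg_ad_scaleR: "bilinear br \<Longrightarrow> exp_neg_ad br s x y = exp_neg_ad br 1 (s *\<^sub>R x) y"
  by (simp add: exp_neg_ad_def funpow_bracket_scaleR power_minus[of s])

lemma exp_neg_ad_eq_psi:
  fixes br :: "'a::euclidean_space \<Rightarrow> 'a \<Rightarrow> 'a"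
  assumes bil: "bilinear br"
  shows "exp_neg_ad br 1 z y = y - br z (psi br z y)"
proof -
  let ?a = "\<lambda>n. (br z ^^ n) y"
  have blz: "bounded_linear (br z)" using bil by (simp add: bilinear_def linear_conv_bounded_linear)
  have shift: "br z (psi_coeff n *\<^sub>R ?a n) = psi_coeff n *\<^sub>R ?a (Suc n)" for n
    by (simp add: bilinear_rmul[OF bil])
  have S: "summable (\<lambda>n. psi_coeff n *\<^sub>R ?a (Suc n))"
    using bounded_linear.summable[OF blz summable_psi[OF bil, of z y]] unfolding shift .
  define E where "E n = ((-1)^n / fact n) *\<^sub>R ?a n" for n
  have ES: "E (Suc n) = - (psi_coeff n *\<^sub>R ?a (Suc n))" for n
    by (simp add: E_def psi_coeff_def)
  have "summable (\<lambda>n. E (Suc n))" unfolding ES by (rule summable_minus[OF S])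
  then have "summable E" by (simp only: summable_Suc_iff)
  then have "suminf E = (\<Sum>n. E (Suc n)) + E 0" using suminf_split_head[of E] by simp
  also have "\<dots> = y - (\<Sum>n. psi_coeff n *\<^sub>R ?a (Suc n))"
    unfolding ES suminf_minus[OF S] by (simp add: E_def)
  also have "(\<Sum>n. psi_coeff n *\<^sub>R ?a (Suc n)) = br z (psi br z y)"
    unfolding psi_def bounded_linear.suminf[OF blz summable_psi[OF bil]] shift ..
  finally show ?thesis by (simp add: E_def exp_neg_ad_def)
qed

lemma pre_lie_bilinear: "pre_lie br \<Longrightarrow> bilinear br"
  by (simp add: pre_lie_def)

lemma pre_lie_bracket_self: "pre_lie br \<Longrightarrow> br x x = 0"
proof -
  assume "pre_lie br"
  then have "br x x + br x x = 0" unfolding pre_lie_def by (metis add.right_inverse)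
  then show "br x x = 0" by (simp flip: scaleR_2)
qed

lemma funpow_bracket_self:
  assumes "pre_lie br"
  shows "(br x ^^ n) x = (if n = 0 then x else 0)"
proof (induction n)
  case (Suc n)
  have "br x 0 = 0" using pre_lie_bilinear[OF assms] by (rule bilinear_rzero)
  then show ?case using Suc pre_lie_bracket_self[OF assms] by (cases n) auto
qed simp

lemma psi_diag:
  assumes "pre_lie br"
  shows "psi br x x = x"
proof -
  have "(\<lambda>n. psi_coeff n *\<^sub>R (br x ^^ n) x) = (\<lambda>n. if n = 0 then x else 0)"
    by (simp add: fun_eq_iff funpow_bracket_self[OF assms] psi_coeff_def)
  then show ?thesis
    unfolding psi_def using sums_single[of 0 "\<lambda>_. x"] by (simp add: sums_iff)
qed

text \<open>Since \<open>\<bar>psi_coeff n\<bar> \<le> 1\<close>, the tail \<open>\<psi>\<^sub>x - 1\<close> is dominated by \<open>\<Sum>\<^sub>n\<^sub>\<ge>\<^sub>1 3\<^sup>-\<^sup>n = 1/2\<close>.\<close>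

lemma norm_psi_diff_le:
  fixes br :: "'a::euclidean_space \<Rightarrow> 'a \<Rightarrow> 'a"
  assumes bil: "bilinear br" and B: "\<And>a b. norm (br a b) \<le> B * norm a * norm b" "0 \<le> B"
    and small: "B * norm x \<le> 1/3"
  shows "norm (psi br x y - y) \<le> norm y / 2"
proof -
  let ?t = "\<lambda>n. psi_coeff n *\<^sub>R (br x ^^ n) y"
  have "psi br x y - y = (\<Sum>n. ?t (Suc n))"
    using suminf_split_head[OF summable_psi[OF bil]] by (simp add: psi_def psi_coeff_def)
  also have "norm \<dots> \<le> (\<Sum>n. (1/3)^n * (norm y / 3))"
  proof (rule norm_suminf_le)
    fix n
    have "inverse (fact (Suc n) :: real) \<le> 1"
      by (rule inverse_le_1_iff[THEN iffD2]) (rule disjI2, rule fact_ge_1)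
    then have c1: "\<bar>psi_coeff (Suc n)\<bar> \<le> 1" using abs_psi_coeff_le[of "Suc n"] by linarith
    have "norm (?t (Suc n)) \<le> (B * norm x)^Suc n * norm y"
      using mult_mono[OF c1 norm_funpow_le[OF B, where x=x and n="Suc n" and y=y]] by simp
    also have "\<dots> \<le> (1/3)^Suc n * norm y"
      using B small by (intro mult_right_mono power_mono) auto
    finally show "norm (?t (Suc n)) \<le> (1/3)^n * (norm y / 3)" by simp
  qed (simp add: summable_mult2)
  also have "\<dots> = (\<Sum>n. (1/3::real)^n) * (norm y / 3)"
    by (rule suminf_mult2[OF summable_geometric, symmetric]) simp
  also have "\<dots> = norm y / 2" by (subst suminf_geometric) simp_all
  finally show ?thesis .
qed

lemma bij_psi:
  fixes br :: "'a::euclidean_space \<Rightarrow> 'a \<Rightarrow> 'a"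
  assumes bil: "bilinear br" and B: "\<And>a b. norm (br a b) \<le> B * norm a * norm b" "0 \<le> B"
    and small: "B * norm x \<le> 1/3"
  shows "bij (psi br x)"
proof -
  have lin: "linear (psi br x)" by (rule linear_psi[OF bil])
  have "inj (psi br x)"
    unfolding linear_injective_0[OF lin]
  proof (intro allI impI)
    fix y assume "psi br x y = 0"
    then show "y = 0" using norm_psi_diff_le[OF bil B small, of y] by simp
  qed
  then show ?thesis using linear_inj_imp_surj[OF lin] by (simp add: bij_def)
qed

lemma exists_open_bij_psi:
  fixes br :: "'a::euclidean_space \<Rightarrow> 'a \<Rightarrow> 'a"
  assumes bil: "bilinear br"
  shows "\<exists>U. open U \<and> 0 \<in> U \<and> (\<forall>x\<in>U. bij (psi br x))"
proof -
  obtain B where B: "B > 0" "\<And>a b. norm (br a b) \<le> B * norm a * norm b"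
    using bilinear_bounded_pos[OF bil] by blast
  have "bij (psi br x)" if "x \<in> ball 0 (1/(3*B))" for x
  proof (rule bij_psi[OF bil B(2) less_imp_le[OF B(1)]])
    have "B * norm x \<le> B * (1/(3*B))" using that B by (intro mult_left_mono) auto
    then show "B * norm x \<le> 1/3" using B by simp
  qed
  then show ?thesis using B by (intro exI[of _ "ball 0 (1/(3*B))"]) auto
qed

section \<open>The Maurer--Cartan equation on the diagonal\<close>

definition differentiable_one_form :: "('a::real_normed_vector \<Rightarrow> 'a \<Rightarrow> 'a) \<Rightarrow> bool" where
  "differentiable_one_form \<phi> \<longleftrightarrow> (\<forall>z. linear (\<phi> z)) \<and> (\<forall>y z. (\<lambda>u. \<phi> u y) differentiable (at z))"

lemma one_form_imp_differentiable_one_form: "one_form \<phi> \<Longrightarrow> differentiable_one_form \<phi>"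
  unfolding one_form_def differentiable_one_form_def smooth_map_def
  by (metis iter_deriv.simps(1))

lemma differentiable_one_form_psi:
  fixes br :: "'a::euclidean_space \<Rightarrow> 'a \<Rightarrow> 'a"
  assumes "bilinear br"
  shows "differentiable_one_form (psi br)"
  unfolding differentiable_one_form_def
  using linear_psi[OF assms] has_derivative_psi[OF assms] differentiableI by blast

lemma has_derivative_frechet_derivative_one_form:
  "differentiable_one_form \<phi> \<Longrightarrow>
    ((\<lambda>u. \<phi> u y) has_derivative frechet_derivative (\<lambda>u. \<phi> u y) (at z)) (at z)"
  unfolding differentiable_one_form_def using frechet_derivative_works by blast

lemma has_vector_derivative_compose_at:
  assumes "(g has_derivative G) (at (p t))" "(p has_vector_derivative v) (at t)"
  shows "((\<lambda>s. g (p s)) has_vector_derivative G v) (at t)"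
proof -
  have "((g \<circ> p) has_derivative (G \<circ> (\<lambda>s. s *\<^sub>R v))) (at t)"
    using assms(2) by (intro diff_chain_at assms(1)) (simp add: has_vector_derivative_def)
  moreover have "G \<circ> (\<lambda>s. s *\<^sub>R v) = (\<lambda>s. s *\<^sub>R G v)"
    using linear_scale[OF has_derivative_linear[OF assms(1)]] by (auto simp: o_def)
  ultimately show ?thesis by (simp add: has_vector_derivative_def o_def)
qed

text \<open>Differentiate \<open>\<phi>\<^sub>x\<^sub>+\<^sub>s\<^sub>y(x + s y) = x + s y\<close> at \<open>s = 0\<close>.\<close>

lemma frechet_derivative_diagonal:
  assumes \<phi>: "differentiable_one_form \<phi>" and diag: "\<And>z. \<phi> z z = z"
  shows "frechet_derivative (\<lambda>z. \<phi> z x) (at x) y = y - \<phi> x y"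
proof -
  define D where "D w = frechet_derivative (\<lambda>z. \<phi> z w) (at x)" for w
  define p where "p s = x + s *\<^sub>R y" for s :: real
  have lin: "linear (\<phi> z)" for z using \<phi> by (simp add: differentiable_one_form_def)
  have pd: "(p has_vector_derivative y) (at 0)"
    unfolding p_def has_vector_derivative_def by (auto intro!: derivative_eq_intros)
  have Dd: "((\<lambda>s. \<phi> (p s) w) has_vector_derivative D w y) (at 0)" for w
  proof -
    have "((\<lambda>u. \<phi> u w) has_derivative D w) (at (p 0))"
      using has_derivative_frechet_derivative_one_form[OF \<phi>] by (simp add: D_def p_def)
    then show ?thesis using has_vector_derivative_compose_at pd by blast
  qed
  have "((\<lambda>s. \<phi> (p s) x + s *\<^sub>R \<phi> (p s) y) has_vector_derivative (D x y + \<phi> x y)) (at 0)"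
    using has_vector_derivative_add[OF Dd has_vector_derivative_scaleR[OF DERIV_ident Dd]]
    by (simp add: p_def)
  moreover have "(\<lambda>s. \<phi> (p s) x + s *\<^sub>R \<phi> (p s) y) = p"
  proof
    fix s
    have "\<phi> (p s) x + s *\<^sub>R \<phi> (p s) y = \<phi> (p s) (x + s *\<^sub>R y)"
      by (simp add: linear_add[OF lin] linear_scale[OF lin])
    also have "\<dots> = p s" using diag[of "p s"] by (simp add: p_def)
    finally show "\<phi> (p s) x + s *\<^sub>R \<phi> (p s) y = p s" .
  qed
  ultimately have "(p has_vector_derivative (D x y + \<phi> x y)) (at 0)" by simp
  then have "D x y + \<phi> x y = y" using pd by (rule vector_derivative_unique_at)
  then show ?thesis unfolding D_def by (simp add: algebra_simps)
qed

lemma MC_diagonal: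
  assumes pl: "pre_lie br" and \<phi>: "differentiable_one_form \<phi>" and diag: "\<And>z. \<phi> z z = z"
  shows "MC br \<phi> x x y = frechet_derivative (\<lambda>z. \<phi> z y) (at x) x + \<phi> x y - y + br x (\<phi> x y)"
proof -
  have "br (\<phi> x y) x = - br x (\<phi> x y)" using pl unfolding pre_lie_def by blast
  then have "form_bracket br \<phi> \<phi> x x y = 2 *\<^sub>R br x (\<phi> x y)"
    unfolding form_bracket_def diag by (simp add: scaleR_2)
  then show ?thesis
    unfolding MC_def d_form_def frechet_derivative_diagonal[OF \<phi> diag] by simp
qed

lemma has_vector_derivative_ray:
  assumes pl: "pre_lie br" and \<phi>: "differentiable_one_form \<phi>" and diag: "\<And>z. \<phi> z z = z"
    and MC: "\<And>x y. MC br \<phi> x x y = 0"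
  shows "((\<lambda>t. t *\<^sub>R \<phi> (t *\<^sub>R x) y) has_vector_derivative y - br x (t *\<^sub>R \<phi> (t *\<^sub>R x) y)) (at t)"
proof -
  have bil: "bilinear br" by (rule pre_lie_bilinear[OF pl])
  define w where "w = t *\<^sub>R x"
  define D where "D = frechet_derivative (\<lambda>z. \<phi> z y) (at w)"
  have Dd: "((\<lambda>z. \<phi> z y) has_derivative D) (at w)"
    unfolding D_def by (rule has_derivative_frechet_derivative_one_form[OF \<phi>])
  have "((\<lambda>s. s *\<^sub>R x) has_vector_derivative x) (at t)"
    by (auto simp: has_vector_derivative_def intro!: derivative_eq_intros)
  with Dd have "((\<lambda>s. \<phi> (s *\<^sub>R x) y) has_vector_derivative D x) (at t)"
    unfolding w_def by (rule has_vector_derivative_compose_at[where p="\<lambda>s. s *\<^sub>R x"])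
  from has_vector_derivative_scaleR[OF DERIV_ident this]
  have "((\<lambda>s. s *\<^sub>R \<phi> (s *\<^sub>R x) y) has_vector_derivative t *\<^sub>R D x + \<phi> w y) (at t)"
    by (simp add: w_def)
  moreover have "t *\<^sub>R D x = D w"
    by (simp add: w_def linear_scale[OF has_derivative_linear[OF Dd]])
  moreover have "D w + \<phi> w y = y - br w (\<phi> w y)"
    using MC[of w y] unfolding MC_diagonal[OF pl \<phi> diag] D_def by (simp add: algebra_simps)
  moreover have "br w (\<phi> w y) = br x (t *\<^sub>R \<phi> w y)"
    by (simp add: w_def bilinear_lmul[OF bil] bilinear_rmul[OF bil])
  ultimately show ?thesis by (simp add: w_def)
qed

lemma linear_ode_zero:
  fixes h :: "real \<Rightarrow> 'a::real_inner"
  assumes L: "bounded_linear L" and hd: "\<And>t. (h has_vector_derivative L (h t)) (at t)" and h0: "h 0 = 0"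
  shows "h 1 = 0"
proof -
  obtain C where C: "\<And>w. norm (L w) \<le> norm w * C" using bounded_linear.bounded[OF L] by blast
  \<comment> \<open>the energy \<open>exp(-2Ct) \<parallel>h t\<parallel>\<^sup>2\<close> is non-increasing and vanishes at \<open>0\<close>\<close>
  define k where "k t = exp (-2*C*t) * (h t \<bullet> h t)" for t
  define D where "D t = exp (-2*C*t) * (-2*C) * (h t \<bullet> h t) + exp (-2*C*t) * (h t \<bullet> L (h t) + L (h t) \<bullet> h t)" for t
  have "(k has_real_derivative D t) (at t)" for t
  proof -
    have i: "((\<lambda>t. h t \<bullet> h t) has_real_derivative (h t \<bullet> L (h t) + L (h t) \<bullet> h t)) (at t)"
      using bounded_bilinear.has_vector_derivative[OF bounded_bilinear_inner hd hd]
      by (simp add: has_real_derivative_iff_has_vector_derivative)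
    have e: "((\<lambda>t. exp (-2*C*t)) has_real_derivative exp (-2*C*t) * (-2*C)) (at t)"
      by (auto intro!: derivative_eq_intros)
    show ?thesis unfolding k_def D_def using DERIV_mult[OF e i] by (simp add: ac_simps)
  qed
  moreover have "D t \<le> 0" for t
  proof -
    have "h t \<bullet> L (h t) \<le> norm (h t) * (norm (h t) * C)"
      using norm_cauchy_schwarz[of "h t" "L (h t)"] mult_left_mono[OF C, of "norm (h t)" "h t"] by simp
    then have "h t \<bullet> L (h t) \<le> C * (h t \<bullet> h t)"
      by (simp add: power2_norm_eq_inner[symmetric] power2_eq_square mult_ac)
    moreover have "D t = exp (-2*C*t) * (2 * (h t \<bullet> L (h t) - C * (h t \<bullet> h t)))"
      unfolding D_def by (simp add: inner_commute[of "L (h t)"] algebra_simps)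
    ultimately show ?thesis by (simp add: mult_nonneg_nonpos)
  qed
  ultimately have "k 1 \<le> k 0" by (intro DERIV_nonpos_imp_nonincreasing[of 0 1 k]) auto
  then have "h 1 \<bullet> h 1 \<le> 0" by (simp add: k_def h0 mult_le_0_iff)
  then show ?thesis by (metis antisym inner_eq_zero_iff inner_ge_zero)
qed

theorem MC_diagonal_unique:
  assumes pl: "pre_lie br"
    and \<phi>: "differentiable_one_form \<phi>" "\<And>z. \<phi> z z = z" "\<And>x y. MC br \<phi> x x y = 0"
    and \<psi>: "differentiable_one_form \<psi>" "\<And>z. \<psi> z z = z" "\<And>x y. MC br \<psi> x x y = 0"
  shows "\<phi> = \<psi>"
proof (intro ext)
  fix x y
  have bil: "bilinear br" by (rule pre_lie_bilinear[OF pl])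
  define h where "h = (\<lambda>t. t *\<^sub>R \<phi> (t *\<^sub>R x) y - t *\<^sub>R \<psi> (t *\<^sub>R x) y)"
  have L: "bounded_linear (\<lambda>w. - br x w)"
    using bil by (simp add: bilinear_def linear_conv_bounded_linear bounded_linear_minus)
  have hd: "(h has_vector_derivative - br x (h t)) (at t)" for t
    unfolding h_def
    using has_vector_derivative_diff[OF has_vector_derivative_ray[OF pl \<phi>, of x y t]
        has_vector_derivative_ray[OF pl \<psi>, of x y t]]
    by (simp add: bilinear_rsub[OF bil])
  have "h 1 = 0" by (rule linear_ode_zero[OF L hd]) (simp add: h_def)
  then show "\<phi> x y = \<psi> x y" by (simp add: h_def)
qed

lemma MC_psi:
  fixes br :: "'a::euclidean_space \<Rightarrow> 'a \<Rightarrow> 'a"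
  assumes pl: "pre_lie br"
  shows "MC br (psi br) x x y = 0"
proof -
  have bil: "bilinear br" by (rule pre_lie_bilinear[OF pl])
  let ?a = "\<lambda>n. (br x ^^ n) y"
  have D: "frechet_derivative (\<lambda>z. psi br z y) (at x) x = (\<Sum>n. (real n * psi_coeff n) *\<^sub>R ?a n)"
    using frechet_derivative_at[OF has_derivative_psi[OF bil, of y x]] series_deriv_psi_terms_diag
    by metis
  have "(\<Sum>n. (real n * psi_coeff n) *\<^sub>R ?a n) + psi br x y = (\<Sum>n. ((-1)^n / fact n) *\<^sub>R ?a n)"
    unfolding psi_def
    by (simp add: suminf_add[OF summable_series_deriv_psi_terms_diag[OF bil] summable_psi[OF bil]]
        psi_coeff_Suc_mult flip: scaleR_add_left)
  also have "\<dots> = y - br x (psi br x y)"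
    using exp_neg_ad_eq_psi[OF bil] by (simp add: exp_neg_ad_def)
  finally show ?thesis
    by (simp add: MC_diagonal[OF pl differentiable_one_form_psi[OF bil] psi_diag[OF pl]] D)
qed

text \<open>\<open>s \<psi>\<^sub>s\<^sub>x(y)\<close> is a primitive of \<open>s \<mapsto> exp(-s ad\<^sub>x) y\<close>.\<close>

lemma phi0_eq_psi:
  fixes br :: "'a::euclidean_space \<Rightarrow> 'a \<Rightarrow> 'a"
  assumes pl: "pre_lie br"
  shows "phi0 br = psi br"
proof (intro ext)
  fix x y
  have bil: "bilinear br" by (rule pre_lie_bilinear[OF pl])
  define G where "G = (\<lambda>s. s *\<^sub>R psi br (s *\<^sub>R x) y)"
  have Gd: "(G has_vector_derivative exp_neg_ad br s x y) (at s)" for s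
  proof -
    have "exp_neg_ad br s x y = y - br (s *\<^sub>R x) (psi br (s *\<^sub>R x) y)"
      by (simp only: exp_neg_ad_scaleR[OF bil, of s] exp_neg_ad_eq_psi[OF bil])
    also have "\<dots> = y - br x (s *\<^sub>R psi br (s *\<^sub>R x) y)"
      by (simp add: bilinear_lmul[OF bil] bilinear_rmul[OF bil])
    finally show ?thesis
      unfolding G_def
      by (rule ssubst) (rule has_vector_derivative_ray[OF pl differentiable_one_form_psi[OF bil] psi_diag[OF pl] MC_psi[OF pl]])
  qed
  have "((\<lambda>s. exp_neg_ad br s x y) has_integral (G 1 - G 0)) {0..1}"
    by (rule fundamental_theorem_of_calculus) (auto intro: has_vector_derivative_at_within[OF Gd])
  then have "phi0 br x y = G 1 - G 0" unfolding phi0_def by (rule integral_unique)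
  then show "phi0 br x y = psi br x y" by (simp add: G_def)
qed

theorem theorem1p1:
  fixes br :: "'a::euclidean_space \<Rightarrow> 'a \<Rightarrow> 'a"
  assumes "pre_lie br"
  shows "(\<exists>\<phi>. one_form \<phi> \<and> (\<forall>x y. MC br \<phi> x x y = 0) \<and> bij (\<phi> 0)
            \<and> (\<exists>U. open U \<and> 0 \<in> U \<and> (\<forall>x\<in>U. bij (\<phi> x))))
       \<and> (one_form (phi0 br) \<and> (\<forall>x y. MC br (phi0 br) x x y = 0) \<and> (\<forall>x. phi0 br x x = x))
       \<and> (\<forall>\<phi>. one_form \<phi> \<and> (\<forall>x y. MC br \<phi> x x y = 0) \<and> (\<forall>x. \<phi> x x = x)
              \<longrightarrow> \<phi> = phi0 br)"
proof -
  have bil: "bilinear br" by (rule pre_lie_bilinear[OF assms])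
  have one_form: "one_form (phi0 br)"
    unfolding phi0_eq_psi[OF assms] one_form_def using linear_psi[OF bil] smooth_map_psi[OF bil] by blast
  have MC: "\<forall>x y. MC br (phi0 br) x x y = 0"
    unfolding phi0_eq_psi[OF assms] using MC_psi[OF assms] by blast
  have diag: "\<forall>x. phi0 br x x = x"
    unfolding phi0_eq_psi[OF assms] using psi_diag[OF assms] by blast
  obtain U where U: "open U" "0 \<in> U" "\<forall>x\<in>U. bij (phi0 br x)"
    unfolding phi0_eq_psi[OF assms] using exists_open_bij_psi[OF bil] by blast
  have "\<phi> = phi0 br" if "one_form \<phi>" "\<forall>x y. MC br \<phi> x x y = 0" "\<forall>x. \<phi> x x = x" for \<phi>
    using MC_diagonal_unique[OF assms one_form_imp_differentiable_one_form[OF that(1)] _ _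
        one_form_imp_differentiable_one_form[OF one_form]] that MC diag by blast
  then show ?thesis using one_form MC diag U by blast
qed

end
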